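(* In the following instance, $\mathrm{OPT}=\Omega(n\ln n/\ln\ln n)$; that is, there exist constants $\kappa>0$ and $n_0$ such that $\mathrm{OPT}\ge\kappa\, n\ln n/\ln\ln n$ for all $n\ge n_0$. Instance: $n$ unit-demand bidders and $m=n^2$ items; for each bidder $i$ and item $\ell$, the signal $s_{i\ell}$ equals $1$ with probability $1/n$ and $0$ with probability $1-1/n$, all signals mutually independent; bidder $i$'s value for item $\ell$ is $v_{i\ell}(\mathbf s)=1+\sum_{j=1}^n s_{j\ell}$.
   Context: Unit-demand: bidder $i$'s value for a set $T$ of items is $\max_{\ell\in T}v_{i\ell}(\mathbf s)$ (and $0$ for $T=\emptyset$). $\mathrm{OPT}=\mathbb E_{\mathbf s}[\mathrm{OPT}(\mathbf s)]$, where $\mathrm{OPT}(\mathbf s)$ is the maximum total value $\sum_{(i,\ell)\in\mu}v_{i\ell}(\mathbf s)$ over matchings $\mu$ of bidders to items (each bidder gets at most one item and each item goes to at most one bidder). *)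

theory Defs
  imports "HOL-Probability.Probability"
begin

definition is_matching :: "nat \<Rightarrow> nat \<Rightarrow> (nat \<times> nat) set \<Rightarrow> bool" where
  "is_matching n m \<mu> \<longleftrightarrow> \<mu> \<subseteq> {..<n} \<times> {..<m} \<and>
     (\<forall>i l i' l'. (i, l) \<in> \<mu> \<longrightarrow> (i', l') \<in> \<mu> \<longrightarrow> (i = i' \<longleftrightarrow> l = l'))"

text \<open>OPT(s): maximal total value over matchings, given values v i l (already
  evaluated at the signal profile).\<close>
definition opt_value :: "nat \<Rightarrow> nat \<Rightarrow> (nat \<Rightarrow> nat \<Rightarrow> real) \<Rightarrow> real" where
  "opt_value n m v = Max ((\<lambda>\<mu>. \<Sum>(i, l)\<in>\<mu>. v i l) ` {\<mu>. is_matching n m \<mu>})"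

definition signal_pmf :: "nat \<Rightarrow> (nat \<times> nat \<Rightarrow> bool) pmf" where
  "signal_pmf n = Pi_pmf ({..<n} \<times> {..<n^2}) False (\<lambda>_. bernoulli_pmf (1 / real n))"

definition inst_value :: "nat \<Rightarrow> (nat \<times> nat \<Rightarrow> bool) \<Rightarrow> nat \<Rightarrow> nat \<Rightarrow> real" where
  "inst_value n s i l = 1 + (\<Sum>j<n. if s (j, l) then 1 else 0)"

definition OPT :: "nat \<Rightarrow> real" where
  "OPT n = measure_pmf.expectation (signal_pmf n) (\<lambda>s. opt_value n (n^2) (inst_value n s))"

end

theory Submission
  imports Defs "HOL-Real_Asymp.Real_Asymp"
begin

text \<open>Reserve for bidder \<open>g\<close> the block of items \<open>g n, \<dots>, g n + n - 1\<close>. The value of an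
  item is one plus its column count, the number of bidders whose signal for it is on; the column
  counts are independent and \<open>Binomial(n, 1/n)\<close>. Bidder \<open>g\<close> can be given value at least \<open>k\<close>
  whenever some item of its block has column count at least \<open>k\<close>, which fails with probability
  \<open>P(Bin < k)\<^sup>n \<le> (1 - P(Bin = k))\<^sup>n\<close>. For \<open>k = \<lfloor>ln n / (2 ln ln n)\<rfloor>\<close> we have
  \<open>k\<^sup>k \<le> n e\<^sup>-\<^sup>2\<close>, so \<open>P(Bin = k) \<ge> (n/k)\<^sup>k n\<^sup>-\<^sup>k e\<^sup>-\<^sup>2 \<ge> 1/n\<close>; hence every bidder is served
  with probability at least \<open>1 - (1 - 1/n)\<^sup>n \<ge> 1/2\<close>, and \<open>OPT \<ge> n k / 2\<close>.\<close>

lemma Pi_pmf_Times_curry: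
  fixes I :: "'a set" and J :: "'b set"
  assumes fI: "finite I" and fJ: "finite J"
  shows "Pi_pmf (I \<times> J) d q =
     map_pmf (\<lambda>F (j, l). F l j) (Pi_pmf J (\<lambda>_. d) (\<lambda>l. Pi_pmf I d (\<lambda>j. q (j, l))))"
    (is "?L = map_pmf ?phi ?Q")
proof (rule pmf_eqI)
  fix g :: "'a \<times> 'b \<Rightarrow> 'c"
  define psi where "psi = (\<lambda>l j. g (j, l))"
  have "inj ?phi"
    by (rule injI) (auto simp: fun_eq_iff)
  then have "pmf (map_pmf ?phi ?Q) (?phi psi) = pmf ?Q psi"
    by (rule pmf_map_inj')
  then have eq: "pmf (map_pmf ?phi ?Q) g = pmf ?Q psi"
    by (simp add: psi_def)
  show "pmf ?L g = pmf (map_pmf ?phi ?Q) g"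
  proof (cases "\<forall>x. x \<notin> I \<times> J \<longrightarrow> g x = d")
    case True
    have "pmf ?Q psi = (\<Prod>l\<in>J. pmf (Pi_pmf I d (\<lambda>j. q (j, l))) (psi l))"
      by (rule pmf_Pi') (use fJ True in \<open>auto simp: psi_def\<close>)
    also have "\<dots> = (\<Prod>l\<in>J. \<Prod>j\<in>I. pmf (q (j, l)) (g (j, l)))"
      by (intro prod.cong refl, subst pmf_Pi') (use fI True in \<open>auto simp: psi_def\<close>)
    also have "\<dots> = (\<Prod>x\<in>I \<times> J. pmf (q x) (g x))"
      by (subst prod.swap) (simp add: prod.cartesian_product)
    also have "\<dots> = pmf ?L g"
      by (rule pmf_Pi'[symmetric]) (use fI fJ True in auto)
    finally show ?thesis using eq by simp
  next
    case False
    then obtain j l where jl: "(j, l) \<notin> I \<times> J" "g (j, l) \<noteq> d" by auto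
    have "pmf ?L g = 0" by (rule pmf_Pi_outside) (use fI fJ jl in auto)
    moreover have "pmf ?Q psi = 0"
    proof (cases "l \<in> J")
      case True
      with jl have "pmf (Pi_pmf I d (\<lambda>j. q (j, l))) (psi l) = 0"
        by (intro pmf_Pi_outside) (auto simp: fI psi_def)
      with True show ?thesis using fJ by (subst pmf_Pi) (auto intro: prod_zero)
    next
      case False
      with jl show ?thesis by (intro pmf_Pi_outside) (auto simp: fJ psi_def fun_eq_iff)
    qed
    ultimately show ?thesis using eq by simp
  qed
qed

definition column_count :: "nat \<Rightarrow> (nat \<times> nat \<Rightarrow> bool) \<Rightarrow> nat \<Rightarrow> nat" where
  "column_count n s l = card {j \<in> {..<n}. s (j, l)}"

lemma inst_value_eq_column_count: "inst_value n s i l = 1 + real (column_count n s l)"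
  unfolding inst_value_def column_count_def by (simp add: sum.If_cases Int_def)

lemma column_count_distribution:
  "map_pmf (column_count n) (signal_pmf n) = Pi_pmf {..<n^2} 0 (\<lambda>_. binomial_pmf n (1 / real n))"
proof -
  define inner where "inner = Pi_pmf {..<n} False (\<lambda>_. bernoulli_pmf (1 / real n))"
  define cnt where "cnt = (\<lambda>f :: nat \<Rightarrow> bool. card {j \<in> {..<n}. f j})"
  define Q where "Q = Pi_pmf {..<n^2} (\<lambda>_. False) (\<lambda>_. inner)"
  have p: "1 / real n \<in> {0..1}"
    by (cases "n = 0") auto
  have "signal_pmf n = map_pmf (\<lambda>F (j, l). F l j) Q"
    unfolding signal_pmf_def inner_def Q_def by (rule Pi_pmf_Times_curry) auto
  then have "map_pmf (column_count n) (signal_pmf n) = map_pmf (\<lambda>F. cnt \<circ> F) Q"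
    by (simp add: map_pmf_comp column_count_def[abs_def] cnt_def comp_def)
  also have "\<dots> = Pi_pmf {..<n^2} 0 (\<lambda>_. map_pmf cnt inner)"
    unfolding Q_def by (rule Pi_pmf_map[symmetric]) (auto simp: cnt_def)
  also have "map_pmf cnt inner = binomial_pmf n (1 / real n)"
    unfolding cnt_def inner_def by (rule binomial_pmf_altdef'[symmetric]) (use p in auto)
  finally show ?thesis .
qed

lemma OPT_eq_expectation_column_counts:
  "OPT n = measure_pmf.expectation (Pi_pmf {..<n^2} 0 (\<lambda>_. binomial_pmf n (1 / real n)))
             (\<lambda>c. opt_value n (n^2) (\<lambda>i l. 1 + real (c l)))"
proof -
  have "inst_value n s = (\<lambda>i l. 1 + real (column_count n s l))" for s
    by (simp add: fun_eq_iff inst_value_eq_column_count)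
  then show ?thesis
    unfolding OPT_def column_count_distribution[symmetric] by simp
qed

lemma matching_value_le_opt_value:
  assumes "is_matching n m \<mu>"
  shows "(\<Sum>(i, l)\<in>\<mu>. v i l) \<le> opt_value n m v"
proof -
  have "{\<mu>. is_matching n m \<mu>} \<subseteq> Pow ({..<n} \<times> {..<m})"
    by (auto simp: is_matching_def)
  then have "finite {\<mu>. is_matching n m \<mu>}"
    by (rule finite_subset) auto
  then show ?thesis
    unfolding opt_value_def using assms by (intro Max_ge) auto
qed

lemma assignment_value_le_opt_value:
  assumes "inj_on L {..<n}" and "L ` {..<n} \<subseteq> {..<m}"
  shows "(\<Sum>i<n. v i (L i)) \<le> opt_value n m v"
proof -
  have "is_matching n m ((\<lambda>i. (i, L i)) ` {..<n})"
    using assms unfolding is_matching_def inj_on_def by auto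
  moreover have "(\<Sum>(i, l)\<in>(\<lambda>i. (i, L i)) ` {..<n}. v i l) = (\<Sum>i<n. v i (L i))"
    by (subst sum.reindex) (auto simp: inj_on_def)
  ultimately show ?thesis
    by (metis matching_value_le_opt_value)
qed

definition item_block :: "nat \<Rightarrow> nat \<Rightarrow> nat set" where
  "item_block n g = {g * n..<g * n + n}"

definition full_blocks :: "nat \<Rightarrow> 'a::ord \<Rightarrow> (nat \<Rightarrow> 'a) \<Rightarrow> nat set" where
  "full_blocks n k c = {g \<in> {..<n}. \<exists>l \<in> item_block n g. k \<le> c l}"

lemma item_block_div:
  assumes "l \<in> item_block n g"
  shows "l div n = g"
  using assms unfolding item_block_def by (intro div_nat_eqI) (auto simp: mult.commute)

lemma item_block_subset:
  assumes "g < n"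
  shows "item_block n g \<subseteq> {..<n^2}"
proof
  fix l assume "l \<in> item_block n g"
  then have "l < Suc g * n"
    by (simp add: item_block_def)
  also have "\<dots> \<le> n * n"
    using assms by (intro mult_right_mono) auto
  finally show "l \<in> {..<n^2}"
    by (simp add: power2_eq_square)
qed

lemma card_full_blocks_le_opt_value:
  fixes c :: "nat \<Rightarrow> nat"
  shows "real k * real (card (full_blocks n k c)) \<le> opt_value n (n^2) (\<lambda>i l. 1 + real (c l))"
proof -
  have "\<forall>g \<in> {..<n}. \<exists>l. l \<in> item_block n g \<and> (g \<in> full_blocks n k c \<longrightarrow> k \<le> c l)"
  proof
    fix g assume g: "g \<in> {..<n}"
    show "\<exists>l. l \<in> item_block n g \<and> (g \<in> full_blocks n k c \<longrightarrow> k \<le> c l)"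
    proof (cases "g \<in> full_blocks n k c")
      case True
      then show ?thesis by (auto simp: full_blocks_def)
    next
      case False
      have "g * n \<in> item_block n g"
        using g by (auto simp: item_block_def)
      with False show ?thesis by blast
    qed
  qed
  from bchoice[OF this] obtain L
    where L_spec: "\<forall>g \<in> {..<n}. L g \<in> item_block n g \<and> (g \<in> full_blocks n k c \<longrightarrow> k \<le> c (L g))"
    by blast
  then have L: "L g \<in> item_block n g" if "g < n" for g
    using that by blast
  from L_spec have L_full: "k \<le> c (L g)" if "g \<in> full_blocks n k c" for g
    using that by (auto simp: full_blocks_def)
  have "real k * real (card (full_blocks n k c)) = (\<Sum>g \<in> full_blocks n k c. real k)"
    by simp
  also have "\<dots> \<le> (\<Sum>g \<in> full_blocks n k c. 1 + real (c (L g)))"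
    by (intro sum_mono) (auto dest: L_full)
  also have "\<dots> \<le> (\<Sum>g<n. 1 + real (c (L g)))"
    by (intro sum_mono2) (auto simp: full_blocks_def)
  also have "\<dots> \<le> opt_value n (n^2) (\<lambda>i l. 1 + real (c l))"
  proof (rule assignment_value_le_opt_value)
    show "inj_on L {..<n}"
      by (rule inj_onI) (metis L item_block_div lessThan_iff)
    show "L ` {..<n} \<subseteq> {..<n^2}"
      using L item_block_subset by blast
  qed
  finally show ?thesis .
qed

lemma measure_Pi_pmf_all_in:
  assumes "finite A" and "B \<subseteq> A"
  shows "measure_pmf.prob (Pi_pmf A d (\<lambda>_. p)) {f. \<forall>x \<in> B. f x \<in> S}
           = measure_pmf.prob p S ^ card B"
proof -
  have "{f. \<forall>x \<in> B. f x \<in> S} = Pi A (\<lambda>x. if x \<in> B then S else UNIV)"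
    using assms(2) by (auto simp: Pi_def)
  then have "measure_pmf.prob (Pi_pmf A d (\<lambda>_. p)) {f. \<forall>x \<in> B. f x \<in> S}
      = (\<Prod>x\<in>A. measure_pmf.prob p (if x \<in> B then S else UNIV))"
    by (simp add: measure_Pi_pmf_Pi assms(1))
  also have "\<dots> = (\<Prod>x\<in>A. if x \<in> B then measure_pmf.prob p S else 1)"
    by (intro prod.cong) auto
  also have "\<dots> = measure_pmf.prob p S ^ card B"
    using assms by (simp add: prod.If_cases Int_absorb1)
  finally show ?thesis .
qed

lemma expectation_card_full_blocks:
  fixes p :: "'a::linorder pmf"
  shows "measure_pmf.expectation (Pi_pmf {..<n^2} d (\<lambda>_. p)) (\<lambda>c. real (card (full_blocks n k c)))
     = real n * (1 - measure_pmf.prob p {..<k} ^ n)"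
proof -
  define M where "M = Pi_pmf {..<n^2} d (\<lambda>_. p)"
  define full where "full = (\<lambda>g. {c. \<exists>l \<in> item_block n g. k \<le> c l})"
  have card_eq: "(\<lambda>c. real (card (full_blocks n k c))) = (\<lambda>c. \<Sum>g<n. indicator (full g) c)"
    by (simp add: fun_eq_iff indicator_def full_def full_blocks_def sum.If_cases Int_def)
  have "measure_pmf.prob M (full g) = 1 - measure_pmf.prob p {..<k} ^ n" if "g < n" for g
  proof -
    have "measure_pmf.prob M {c. \<forall>l \<in> item_block n g. c l \<in> {..<k}}
        = measure_pmf.prob p {..<k} ^ n"
      unfolding M_def using item_block_subset[OF that]
      by (subst measure_Pi_pmf_all_in) (auto simp: item_block_def)
    moreover have "full g = UNIV - {c. \<forall>l \<in> item_block n g. c l \<in> {..<k}}"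
      by (auto simp: full_def not_less)
    ultimately show ?thesis
      using measure_pmf.prob_compl[of "{c. \<forall>l \<in> item_block n g. c l \<in> {..<k}}" M] by simp
  qed
  then have "measure_pmf.expectation M (\<lambda>c. \<Sum>g<n. indicator (full g) c)
      = real n * (1 - measure_pmf.prob p {..<k} ^ n)"
    by (subst Bochner_Integration.integral_sum) (auto simp: top.not_eq_extremum[symmetric])
  then show ?thesis
    unfolding M_def card_eq .
qed

lemma OPT_ge_binomial_tail:
  "real n * real k * (1 - measure_pmf.prob (binomial_pmf n (1 / real n)) {..<k} ^ n) \<le> OPT n"
proof -
  define M where "M = Pi_pmf {..<n^2} (0::nat) (\<lambda>_. binomial_pmf n (1 / real n))"
  have "finite (set_pmf (binomial_pmf n (1 / real n)))"
    by (rule finite_set_pmf_binomial_pmf) (cases "n = 0", auto)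
  then have "finite (set_pmf M)"
    unfolding M_def by (auto simp: set_Pi_pmf)
  then have integrable: "integrable M f" for f :: "_ \<Rightarrow> real"
    by (rule integrable_measure_pmf_finite)
  have "real n * real k * (1 - measure_pmf.prob (binomial_pmf n (1 / real n)) {..<k} ^ n)
      = measure_pmf.expectation M (\<lambda>c. real k * real (card (full_blocks n k c)))"
    unfolding M_def integral_mult_right_zero expectation_card_full_blocks by simp
  also have "\<dots> \<le> measure_pmf.expectation M (\<lambda>c. opt_value n (n^2) (\<lambda>i l. 1 + real (c l)))"
    by (intro integral_mono integrable card_full_blocks_le_opt_value)
  also have "\<dots> = OPT n"
    unfolding M_def by (rule OPT_eq_expectation_column_counts[symmetric])
  finally show ?thesis .
qed

lemma exp_minus_two_le_one_minus_inverse_pow: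
  assumes "2 \<le> n"
  shows "exp (-2) \<le> (1 - 1 / real n) ^ n"
proof -
  have "- (1 / real n) - 2 * (1 / real n)^2 \<le> ln (1 - 1 / real n)"
    using assms by (intro ln_one_minus_pos_lower_bound) auto
  moreover have "2 * (1 / real n)^2 \<le> 1 / real n"
    using assms by (simp add: power2_eq_square field_simps)
  ultimately have "-2 / real n \<le> ln (1 - 1 / real n)"
    by simp
  then have "-2 \<le> real n * ln (1 - 1 / real n)"
    using assms by (simp add: field_simps)
  then have "exp (-2) \<le> exp (real n * ln (1 - 1 / real n))"
    by simp
  also have "\<dots> = (1 - 1 / real n) ^ n"
    using assms by (subst exp_of_nat_mult) simp
  finally show ?thesis .
qed

lemma one_minus_inverse_pow_le_half:
  assumes "1 \<le> n"
  shows "(1 - 1 / real n) ^ n \<le> 1 / 2"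
proof -
  have "(1 - 1 / real n) ^ n \<le> exp (- 1 / real n) ^ n"
    using assms exp_ge_add_one_self[of "- 1 / real n"] by (intro power_mono) auto
  also have "\<dots> = exp (-1)"
    using assms by (simp add: exp_of_nat_mult[symmetric])
  also have "\<dots> \<le> 1 / 2"
    using exp_ge_add_one_self[of 1] by (simp add: exp_minus field_simps)
  finally show ?thesis .
qed

lemma pmf_binomial_inverse_ge:
  assumes "2 \<le> n" and "k \<le> n"
  shows "exp (-2) / real k ^ k \<le> pmf (binomial_pmf n (1 / real n)) k"
proof -
  have "real k ^ k > 0"
    by (cases k) auto
  then have "exp (-2) / real k ^ k = (real n / real k) ^ k * (1 / real n) ^ k * exp (-2)"
    using assms by (simp add: field_simps)
  also have "\<dots> \<le> real (n choose k) * (1 / real n) ^ k * (1 - 1 / real n) ^ (n - k)"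
  proof (intro mult_mono)
    show "(real n / real k) ^ k \<le> real (n choose k)"
      using binomial_ge_n_over_k_pow_k[OF assms(2)] by simp
    have "exp (-2) \<le> (1 - 1 / real n) ^ n"
      using assms(1) by (rule exp_minus_two_le_one_minus_inverse_pow)
    also have "\<dots> \<le> (1 - 1 / real n) ^ (n - k)"
      using assms(1) by (intro power_decreasing) auto
    finally show "exp (-2) \<le> (1 - 1 / real n) ^ (n - k)" .
  qed auto
  also have "\<dots> = pmf (binomial_pmf n (1 / real n)) k"
    using assms(1) by simp
  finally show ?thesis .
qed

lemma threshold_real_bounds:
  fixes L :: real
  assumes "4 \<le> L" and "4 * ln L \<le> L"
  shows "2 \<le> L / (2 * ln L)" and "L / (2 * ln L) \<le> L"
    and "L / (2 * ln L) * ln (L / (2 * ln L)) \<le> L / 2"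
proof -
  have "1 \<le> ln L"
    using assms(1) exp_le by (subst ln_ge_iff) auto
  then show x2: "2 \<le> L / (2 * ln L)" and xL: "L / (2 * ln L) \<le> L"
    using assms by (simp_all add: field_simps)
  have "ln (L / (2 * ln L)) \<le> ln L"
    using x2 xL by (subst ln_le_cancel_iff) auto
  then have "L / (2 * ln L) * ln (L / (2 * ln L)) \<le> L / (2 * ln L) * ln L"
    using x2 by (intro mult_left_mono) auto
  also have "\<dots> = L / 2"
    using \<open>1 \<le> ln L\<close> by simp
  finally show "L / (2 * ln L) * ln (L / (2 * ln L)) \<le> L / 2" .
qed

definition count_threshold :: "nat \<Rightarrow> nat" where
  "count_threshold n = nat \<lfloor>ln (real n) / (2 * ln (ln (real n)))\<rfloor>"

lemma count_threshold_bounds: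
  assumes "4 \<le> ln (real n)" and "4 * ln (ln (real n)) \<le> ln (real n)"
  shows "ln (real n) / (4 * ln (ln (real n))) \<le> real (count_threshold n)"
    and "real (count_threshold n) ^ count_threshold n \<le> real n * exp (-2)"
    and "count_threshold n \<le> n"
proof -
  define L where "L = ln (real n)"
  define x where "x = L / (2 * ln L)"
  define k where "k = count_threshold n"
  have x2: "2 \<le> x" and xL: "x \<le> L" and xlnx: "x * ln x \<le> L / 2"
    using threshold_real_bounds[of L] assms unfolding x_def L_def by auto
  have n: "real n > 0"
    using assms(1) by (cases "n = 0") auto
  have k: "real k = of_int \<lfloor>x\<rfloor>"
    using x2 by (simp add: k_def count_threshold_def x_def L_def)
  then have kx: "real k \<le> x" and kx2: "x / 2 \<le> real k"
    using x2 real_of_int_floor_add_one_gt[of x] by linarith+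
  then show "ln (real n) / (4 * ln (ln (real n))) \<le> real (count_threshold n)"
    by (simp add: x_def L_def k_def)
  have "real k * ln (real k) \<le> x * ln x"
    using kx kx2 x2 by (intro mult_mono) auto
  have "real k ^ k = exp (real k * ln (real k))"
    using kx2 x2 by (simp add: powr_realpow[symmetric] powr_def)
  also have "\<dots> \<le> exp (L - 2)"
    using \<open>real k * ln (real k) \<le> x * ln x\<close> xlnx assms(1) by (simp add: L_def)
  also have "\<dots> = real n * exp (-2)"
    using n by (simp add: L_def exp_diff exp_minus field_simps)
  finally show "real (count_threshold n) ^ count_threshold n \<le> real n * exp (-2)"
    by (simp add: k_def)
  have "L \<le> real n"
    using n ln_bound by (simp add: L_def)
  then show "count_threshold n \<le> n"
    using kx xL by (simp add: k_def)
qed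

lemma pmf_binomial_count_threshold_ge:
  assumes "4 \<le> ln (real n)" and "4 * ln (ln (real n)) \<le> ln (real n)"
  shows "1 / real n \<le> pmf (binomial_pmf n (1 / real n)) (count_threshold n)"
proof -
  define k where "k = count_threshold n"
  have n: "2 \<le> n"
    using assms(1) by (cases "n \<le> 1") (auto simp: le_Suc_eq)
  have "real k ^ k > 0"
    by (cases k) auto
  then have "1 / real n \<le> exp (-2) / real k ^ k"
    using count_threshold_bounds(2)[OF assms] n by (simp add: k_def field_simps)
  also have "\<dots> \<le> pmf (binomial_pmf n (1 / real n)) k"
    using n count_threshold_bounds(3)[OF assms] by (intro pmf_binomial_inverse_ge) (auto simp: k_def)
  finally show ?thesis
    by (simp add: k_def)
qed

lemma OPT_ge_count_threshold:
  assumes "4 \<le> ln (real n)" and "4 * ln (ln (real n)) \<le> ln (real n)"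
  shows "real n * real (count_threshold n) / 2 \<le> OPT n"
proof -
  define k where "k = count_threshold n"
  define B where "B = binomial_pmf n (1 / real n)"
  define P where "P = measure_pmf.prob B {..<k}"
  have n: "1 \<le> n"
    using assms(1) by (cases n) auto
  have "P + pmf B k = measure_pmf.prob B ({..<k} \<union> {k})"
    unfolding P_def by (subst measure_pmf.finite_measure_Union) (auto simp: measure_pmf_single)
  also have "\<dots> \<le> 1"
    by simp
  finally have "P \<le> 1 - 1 / real n"
    using pmf_binomial_count_threshold_ge[OF assms] by (simp add: B_def k_def)
  then have "P ^ n \<le> (1 - 1 / real n) ^ n"
    by (intro power_mono) (simp_all add: P_def)
  also have "\<dots> \<le> 1 / 2"
    using n by (rule one_minus_inverse_pow_le_half)
  finally have "1 / 2 \<le> 1 - P ^ n"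
    by simp
  then have "real n * real k / 2 \<le> real n * real k * (1 - P ^ n)"
    using mult_left_mono[of "1 / 2" "1 - P ^ n" "real n * real k"] by simp
  also have "\<dots> \<le> OPT n"
    unfolding P_def B_def by (rule OPT_ge_binomial_tail)
  finally show ?thesis
    by (simp add: k_def)
qed

theorem mainTheorem5:
  shows "\<exists>\<kappa>::real. \<kappa> > 0 \<and> (\<exists>n0::nat. \<forall>n\<ge>n0.
           OPT n \<ge> \<kappa> * real n * ln (real n) / ln (ln (real n)))"
proof -
  have "eventually (\<lambda>x::real. 4 \<le> ln x) at_top"
    and "eventually (\<lambda>x::real. 4 * ln (ln x) \<le> ln x) at_top"
    by real_asymp+
  then have "eventually (\<lambda>n. 4 \<le> ln (real n) \<and> 4 * ln (ln (real n)) \<le> ln (real n)) sequentially"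
    by (intro eventually_compose_filterlim[OF _ filterlim_real_sequentially] eventually_conj)
  then obtain N where N: "\<And>n. n \<ge> N \<Longrightarrow> 4 \<le> ln (real n) \<and> 4 * ln (ln (real n)) \<le> ln (real n)"
    unfolding eventually_sequentially by blast
  have "1 / 8 * real n * ln (real n) / ln (ln (real n)) \<le> OPT n" if "n \<ge> N" for n
  proof -
    have "1 / 8 * real n * ln (real n) / ln (ln (real n))
        = real n / 2 * (ln (real n) / (4 * ln (ln (real n))))"
      by simp
    also have "\<dots> \<le> real n / 2 * real (count_threshold n)"
      using count_threshold_bounds(1) N[OF that] by (intro mult_left_mono) auto
    also have "\<dots> \<le> OPT n"
      using OPT_ge_count_threshold N[OF that] by simp
    finally show ?thesis .
  qed
  then show ?thesis
    by (intro exI[of _ "1 / 8"]) auto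
qed

end
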